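(* Let $R$ be a QNA and, for $k\in[0,N]$, let $Q_k$ be the subgroup of $Q=X(\mathcal H)$ generated by $\underline{\beta_1},\ldots,\underline{\beta_k}$, where $\underline{\beta_i}=\operatorname{wt}(x_i)$. For $k\in[1,N]$: (a) if $\delta_k\neq0$ then $Q_k=Q_{k-1}$; (b) if $\delta_k=0$ then $Q_k=Q_{k-1}\oplus\mathbb Z\underline{\beta_k}$.
   Context: ${\mathbb K}$ is a field of characteristic $0$. A quantum nilpotent algebra (QNA) is an iterated Ore extension $R={\mathbb K}[x_1][x_2;\sigma_2,\delta_2]\cdots[x_N;\sigma_N,\delta_N]$, where $R_k={\mathbb K}[x_1][x_2;\sigma_2,\delta_2]\cdots[x_k;\sigma_k,\delta_k]$ ($R_0={\mathbb K}$), $\sigma_k$ is a ${\mathbb K}$-automorphism and $\delta_k$ a $\sigma_k$-derivation of $R_{k-1}$, together with a torus $\mathcal H$ acting rationally by ${\mathbb K}$-automorphisms on $R$ with each $x_i$ an $\mathcal H$-eigenvector, such that: (i) $\sigma_k(x_j)=\lambda_{kj}x_j$ for $j<k$, with $\lambda_{kj}\in{\mathbb K}^*$; (ii) $\delta_k$ is locally nilpotent on $R_{k-1}$; (iii) for each $k$ there exist $h_k\in\mathcal H$ and $q_k\in{\mathbb K}^*$ not a root of unity such that $h_k$ acts on $R_{k-1}$ as $\sigma_k$ and $h_k\cdot x_k=q_kx_k$. The rank is $n=|\{k:\delta_k=0\}|$, and $\mathcal H=({\mathbb K}^* )^n$ is taken to be this maximal torus. Its character group $Q=X(\mathcal H)\cong\mathbb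 Z^n$ grades $R$; homogeneous elements are the $\mathcal H$-eigenvectors, and for homogeneous $a$, $\operatorname{wt}(a)=(\alpha_1,\ldots,\alpha_n)\in\mathbb Z^n$ is defined by $(h_1,\ldots,h_n)\cdot a=h_1^{\alpha_1}\cdots h_n^{\alpha_n}a$. *)

theory Defs
  imports Main
begin

definition Kalg :: "('k::field \<Rightarrow> 'r::ring_1) \<Rightarrow> bool" where
  "Kalg \<iota> \<longleftrightarrow> \<iota> 0 = 0 \<and> \<iota> 1 = 1 \<and> (\<forall>a b. \<iota> (a + b) = \<iota> a + \<iota> b)
     \<and> (\<forall>a b. \<iota> (a * b) = \<iota> a * \<iota> b) \<and> (\<forall>c r. \<iota> c * r = r * \<iota> c) \<and> inj \<iota>"

fun mono :: "(nat \<Rightarrow> 'r::ring_1) \<Rightarrow> nat \<Rightarrow> (nat \<Rightarrow> nat) \<Rightarrow> 'r" where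
  "mono x 0 e = 1"
| "mono x (Suc k) e = mono x k e * x (Suc k) ^ e (Suc k)"

definition expv :: "nat \<Rightarrow> (nat \<Rightarrow> nat) set" where
  "expv k = {e. \<forall>i. (i = 0 \<or> k < i) \<longrightarrow> e i = 0}"

definition Rsub :: "('k::field \<Rightarrow> 'r::ring_1) \<Rightarrow> (nat \<Rightarrow> 'r) \<Rightarrow> nat \<Rightarrow> 'r set" where
  "Rsub \<iota> x k = {r. \<exists>S c. finite S \<and> S \<subseteq> expv k \<and> r = (\<Sum>e\<in>S. \<iota> (c e) * mono x k e)}"

definition PBW_basis :: "('k::field \<Rightarrow> 'r::ring_1) \<Rightarrow> (nat \<Rightarrow> 'r) \<Rightarrow> nat \<Rightarrow> bool" where
  "PBW_basis \<iota> x N \<longleftrightarrow> Rsub \<iota> x N = UNIV \<and>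
     (\<forall>S c. finite S \<and> S \<subseteq> expv N \<and> (\<Sum>e\<in>S. \<iota> (c e) * mono x N e) = 0 \<longrightarrow> (\<forall>e\<in>S. c e = 0))"

definition is_Kaut_on :: "('k::field \<Rightarrow> 'r::ring_1) \<Rightarrow> 'r set \<Rightarrow> ('r \<Rightarrow> 'r) \<Rightarrow> bool" where
  "is_Kaut_on \<iota> A f \<longleftrightarrow> bij_betw f A A \<and>
     (\<forall>a\<in>A. \<forall>b\<in>A. f (a + b) = f a + f b \<and> f (a * b) = f a * f b) \<and> (\<forall>c. f (\<iota> c) = \<iota> c)"

definition is_sigma_der :: "('k::field \<Rightarrow> 'r::ring_1) \<Rightarrow> 'r set \<Rightarrow> ('r \<Rightarrow> 'r) \<Rightarrow> ('r \<Rightarrow> 'r) \<Rightarrow> bool" where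
  "is_sigma_der \<iota> A s d \<longleftrightarrow> (\<forall>a\<in>A. d a \<in> A) \<and>
     (\<forall>a\<in>A. \<forall>b\<in>A. d (a + b) = d a + d b \<and> d (a * b) = s a * d b + d a * b) \<and>
     (\<forall>c. \<forall>a\<in>A. d (\<iota> c * a) = \<iota> c * d a)"

text \<open>The torus (K^*)^n, elements encoded as functions nat => K equal to 1 outside [0,n).\<close>
definition torus :: "nat \<Rightarrow> (nat \<Rightarrow> 'k::field) set" where
  "torus n = {h. (\<forall>i<n. h i \<noteq> 0) \<and> (\<forall>i\<ge>n. h i = 1)}"

text \<open>Character lattice Q = X(H) = Z^n, encoded as functions nat => int vanishing outside [0,n).\<close>
definition lattice :: "nat \<Rightarrow> (nat \<Rightarrow> int) set" where
  "lattice n = {\<alpha>. \<forall>i\<ge>n. \<alpha> i = 0}"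

definition chi :: "nat \<Rightarrow> (nat \<Rightarrow> int) \<Rightarrow> (nat \<Rightarrow> 'k::field) \<Rightarrow> 'k" where
  "chi n \<alpha> h = (\<Prod>i<n. h i powi \<alpha> i)"

definition has_weight :: "('k::field \<Rightarrow> 'r::ring_1) \<Rightarrow> nat \<Rightarrow> ((nat \<Rightarrow> 'k) \<Rightarrow> 'r \<Rightarrow> 'r) \<Rightarrow> 'r \<Rightarrow> (nat \<Rightarrow> int) \<Rightarrow> bool" where
  "has_weight \<iota> n act a \<alpha> \<longleftrightarrow> \<alpha> \<in> lattice n \<and> (\<forall>h\<in>torus n. act h a = \<iota> (chi n \<alpha> h) * a)"

definition wt :: "('k::field \<Rightarrow> 'r::ring_1) \<Rightarrow> nat \<Rightarrow> ((nat \<Rightarrow> 'k) \<Rightarrow> 'r \<Rightarrow> 'r) \<Rightarrow> 'r \<Rightarrow> nat \<Rightarrow> int" where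
  "wt \<iota> n act a = (THE \<alpha>. has_weight \<iota> n act a \<alpha>)"

text \<open>Rational action of (K^*)^n by K-algebra automorphisms: a group action by automorphisms
  for which R is the sum of its weight spaces for (rational) characters.\<close>
definition rational_torus_action :: "('k::field \<Rightarrow> 'r::ring_1) \<Rightarrow> nat \<Rightarrow> ((nat \<Rightarrow> 'k) \<Rightarrow> 'r \<Rightarrow> 'r) \<Rightarrow> bool" where
  "rational_torus_action \<iota> n act \<longleftrightarrow>
     (\<forall>h\<in>torus n. bij (act h) \<and> (\<forall>a b. act h (a + b) = act h a + act h b \<and> act h (a * b) = act h a * act h b)
        \<and> (\<forall>c. act h (\<iota> c) = \<iota> c))
   \<and> act (\<lambda>i. 1) = id
   \<and> (\<forall>h\<in>torus n. \<forall>g\<in>torus n. act (\<lambda>i. h i * g i) = act h \<circ> act g)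
   \<and> (\<forall>a. \<exists>S f. finite S \<and> S \<subseteq> lattice n \<and> (\<forall>\<alpha>\<in>S. has_weight \<iota> n act (f \<alpha>) \<alpha>) \<and> a = (\<Sum>\<alpha>\<in>S. f \<alpha>))"

definition is_eigvec :: "('k::field \<Rightarrow> 'r::ring_1) \<Rightarrow> nat \<Rightarrow> ((nat \<Rightarrow> 'k) \<Rightarrow> 'r \<Rightarrow> 'r) \<Rightarrow> 'r \<Rightarrow> bool" where
  "is_eigvec \<iota> n act a \<longleftrightarrow> a \<noteq> 0 \<and> (\<forall>h\<in>torus n. \<exists>c. act h a = \<iota> c * a)"

text \<open>Quantum nilpotent algebra R = K[x_1][x_2;s_2,d_2]...[x_N;s_N,d_N] (with R the whole type 'r),
  with the maximal torus H = (K^*)^n (n = rank) acting rationally and faithfully.\<close>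
definition QNA :: "('k::field \<Rightarrow> 'r::ring_1) \<Rightarrow> (nat \<Rightarrow> 'r) \<Rightarrow> nat \<Rightarrow> (nat \<Rightarrow> 'r \<Rightarrow> 'r) \<Rightarrow> (nat \<Rightarrow> 'r \<Rightarrow> 'r)
     \<Rightarrow> nat \<Rightarrow> ((nat \<Rightarrow> 'k) \<Rightarrow> 'r \<Rightarrow> 'r) \<Rightarrow> bool" where
  "QNA \<iota> x N \<sigma> \<delta> n act \<longleftrightarrow>
     Kalg \<iota> \<and> PBW_basis \<iota> x N
   \<and> (\<forall>k\<in>{1..N}. is_Kaut_on \<iota> (Rsub \<iota> x (k - 1)) (\<sigma> k)
        \<and> is_sigma_der \<iota> (Rsub \<iota> x (k - 1)) (\<sigma> k) (\<delta> k)
        \<and> (\<forall>a\<in>Rsub \<iota> x (k - 1). x k * a = \<sigma> k a * x k + \<delta> k a))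
   \<and> (\<forall>k\<in>{1..N}. \<forall>j\<in>{1..<k}. \<exists>l. l \<noteq> 0 \<and> \<sigma> k (x j) = \<iota> l * x j)
   \<and> (\<forall>k\<in>{1..N}. \<forall>a\<in>Rsub \<iota> x (k - 1). \<exists>m. (\<delta> k ^^ m) a = 0)
   \<and> rational_torus_action \<iota> n act
   \<and> (\<forall>i\<in>{1..N}. is_eigvec \<iota> n act (x i))
   \<and> (\<forall>k\<in>{1..N}. \<exists>h\<in>torus n. (\<forall>a\<in>Rsub \<iota> x (k - 1). act h a = \<sigma> k a)
        \<and> (\<exists>q. q \<noteq> 0 \<and> (\<forall>m::nat. m > 0 \<longrightarrow> q ^ m \<noteq> 1) \<and> act h (x k) = \<iota> q * x k))
   \<and> n = card {k\<in>{1..N}. \<forall>a\<in>Rsub \<iota> x (k - 1). \<delta> k a = 0}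
   \<and> (\<forall>h\<in>torus n. act h = id \<longrightarrow> h = (\<lambda>i. 1))"

definition Qgen :: "('k::field \<Rightarrow> 'r::ring_1) \<Rightarrow> nat \<Rightarrow> ((nat \<Rightarrow> 'k) \<Rightarrow> 'r \<Rightarrow> 'r) \<Rightarrow> (nat \<Rightarrow> 'r) \<Rightarrow> nat \<Rightarrow> (nat \<Rightarrow> int) set" where
  "Qgen \<iota> n act x k = {\<beta>. \<exists>c::nat \<Rightarrow> int. \<beta> = (\<lambda>t. \<Sum>i\<in>{1..k}. c i * wt \<iota> n act (x i) t)}"

end

theory Submission
  imports Defs
begin

(* Part (a): if \<delta>_k \<noteq> 0, then \<delta>_k is nonzero on some monomial m of R_{k-1}, and
   \<delta>_k(m) = x_k m - \<sigma>_k(m) x_k is a nonzero homogeneous element of R_{k-1} of weight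
   wt x_k + wt m.  Every weight of R_{k-1} lies in Q_{k-1} (weight spaces are independent),
   hence so does wt x_k.

   Part (b): Q_k = Q_{k-1} + Z wt x_k always; directness is a rank count.  If m wt x_k \<in> Q_{k-1}
   with m \<noteq> 0, choose a nonzero v \<in> Z^n orthogonal to the n - 1 weights wt x_i with \<delta>_i = 0,
   i \<noteq> k.  By (a) and induction on i, v is orthogonal to every wt x_i, so the cocharacter v
   evaluated at 2 fixes every x_i, hence acts trivially on R.  Faithfulness forces v = 0. *)

lemma two_power_int_eq_1D:
  assumes "(2::'k::field_char_0) powi a = 1"
  shows "a = 0"
proof -
  have nonneg: "b = 0" if "(2::'k) powi b = 1" "b \<ge> 0" for b :: int
  proof -
    have "(of_nat (2 ^ nat b) :: 'k) = 1" using that by (simp add: power_int_nonneg_exp)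
    then have "(2::nat) ^ nat b = 1" using of_nat_eq_1_iff by blast
    then show "b = 0" using that(2) by simp
  qed
  show ?thesis
  proof (cases "a \<ge> 0")
    case True
    then show ?thesis using nonneg assms by blast
  next
    case False
    have "(2::'k) powi (-a) = 1" using assms by (simp add: power_int_minus)
    then show ?thesis using nonneg[of "-a"] False by simp
  qed
qed

lemma two_power_int_inj:
  assumes "(2::'k::field_char_0) powi a = 2 powi b"
  shows "a = b"
  using two_power_int_eq_1D[of "a - b"] assms by (simp add: power_int_diff)

lemma prod_power_int: "(c::'k::field) \<noteq> 0 \<Longrightarrow> (\<Prod>j\<in>A. c powi f j) = c powi (\<Sum>j\<in>A. f j)"
  by (induction A rule: infinite_finite_induct) (auto simp: power_int_add)

definition cochar :: "nat \<Rightarrow> (nat \<Rightarrow> int) \<Rightarrow> 'k::field \<Rightarrow> nat \<Rightarrow> 'k" where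
  "cochar n v c = (\<lambda>j. if j < n then c powi v j else 1)"

lemma cochar_in_torus: "c \<noteq> 0 \<Longrightarrow> cochar n v c \<in> torus n"
  unfolding cochar_def torus_def by auto

lemma chi_cochar:
  assumes "c \<noteq> 0"
  shows "chi n \<alpha> (cochar n v c) = c powi (\<Sum>j<n. v j * \<alpha> j)"
proof -
  have "chi n \<alpha> (cochar n v c) = (\<Prod>j<n. c powi (v j * \<alpha> j))"
    unfolding chi_def cochar_def by (rule prod.cong) (auto simp: power_int_mult)
  then show ?thesis using prod_power_int[OF assms] by simp
qed

lemma chi_add:
  assumes "h \<in> torus n"
  shows "chi n (\<lambda>t. \<alpha> t + \<beta> t) h = chi n \<alpha> h * chi n \<beta> h"
proof -
  have "chi n (\<lambda>t. \<alpha> t + \<beta> t) h = (\<Prod>i<n. h i powi \<alpha> i * h i powi \<beta> i)"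
    unfolding chi_def by (rule prod.cong) (use assms in \<open>auto simp: torus_def power_int_add\<close>)
  then show ?thesis unfolding chi_def by (simp add: prod.distrib)
qed

lemma chi_zero: "chi n (\<lambda>t. 0) h = 1"
  unfolding chi_def by simp

lemma chi_separates:
  assumes "\<alpha> \<in> lattice n" "\<beta> \<in> lattice n" "\<alpha> \<noteq> \<beta>"
  shows "\<exists>h\<in>torus n. chi n \<alpha> h \<noteq> (chi n \<beta> h :: 'k::field_char_0)"
proof -
  obtain j where j: "\<alpha> j \<noteq> \<beta> j" using assms(3) by auto
  have "j < n" using j assms(1,2) unfolding lattice_def by (cases "j < n") auto
  define h :: "nat \<Rightarrow> 'k" where "h = cochar n (\<lambda>i. of_bool (i = j)) 2"
  have "{..<n} \<inter> {i. i = j} = {j}" using \<open>j < n\<close> by auto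
  then have "chi n \<gamma> h = 2 powi \<gamma> j" for \<gamma>
    by (simp add: h_def chi_cochar)
  then have "chi n \<alpha> h \<noteq> chi n \<beta> h" using j two_power_int_inj by metis
  moreover have "h \<in> torus n" unfolding h_def by (simp add: cochar_in_torus)
  ultimately show ?thesis by blast
qed

lemma Kalg_diff: "Kalg \<iota> \<Longrightarrow> \<iota> (a - b) = \<iota> a - \<iota> b"
  unfolding Kalg_def by (metis add_diff_cancel diff_add_cancel)

lemma Kalg_mult: "Kalg \<iota> \<Longrightarrow> \<iota> (a * b) = \<iota> a * \<iota> b"
  unfolding Kalg_def by blast

lemma Kalg_one: "Kalg \<iota> \<Longrightarrow> \<iota> 1 = 1"
  unfolding Kalg_def by blast

lemma Kalg_commute: "Kalg \<iota> \<Longrightarrow> \<iota> c * r = r * \<iota> c"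
  unfolding Kalg_def by blast

lemma Kalg_mult_eq_0D:
  assumes "Kalg \<iota>" "c \<noteq> 0" "\<iota> c * y = 0"
  shows "y = 0"
proof -
  have "y = \<iota> (inverse c * c) * y" using assms(1,2) by (simp add: Kalg_one)
  also have "\<dots> = \<iota> (inverse c) * (\<iota> c * y)" using assms(1) by (simp add: Kalg_mult mult.assoc)
  finally show ?thesis using assms(3) by simp
qed

locale torus_action =
  fixes \<iota> :: "'k::field_char_0 \<Rightarrow> 'r::ring_1" and n :: nat and act :: "(nat \<Rightarrow> 'k) \<Rightarrow> 'r \<Rightarrow> 'r"
  assumes Kalg: "Kalg \<iota>" and rational: "rational_torus_action \<iota> n act"
begin

lemma act_add: "h \<in> torus n \<Longrightarrow> act h (a + b) = act h a + act h b"
  using rational unfolding rational_torus_action_def by blast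

lemma act_mult: "h \<in> torus n \<Longrightarrow> act h (a * b) = act h a * act h b"
  using rational unfolding rational_torus_action_def by blast

lemma act_scalar: "h \<in> torus n \<Longrightarrow> act h (\<iota> c) = \<iota> c"
  using rational unfolding rational_torus_action_def by blast

lemma act_0: "h \<in> torus n \<Longrightarrow> act h 0 = 0"
  using act_add[of h 0 0] by simp

lemma act_1: "h \<in> torus n \<Longrightarrow> act h 1 = 1"
  using act_scalar[of h 1] Kalg_one[OF Kalg] by simp

lemma act_diff: "h \<in> torus n \<Longrightarrow> act h (a - b) = act h a - act h b"
  using act_add[of h "a - b" b] by (simp add: eq_diff_eq)

lemma act_scale: "h \<in> torus n \<Longrightarrow> act h (\<iota> c * a) = \<iota> c * act h a"
  by (simp add: act_mult act_scalar)

lemma act_power: "h \<in> torus n \<Longrightarrow> act h (a ^ m) = act h a ^ m"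
  by (induction m) (auto simp: act_1 act_mult)

lemma act_sum: "h \<in> torus n \<Longrightarrow> act h (sum f S) = (\<Sum>i\<in>S. act h (f i))"
  by (induction S rule: infinite_finite_induct) (auto simp: act_0 act_add)

lemma has_weightI:
  "\<alpha> \<in> lattice n \<Longrightarrow> (\<And>h::nat \<Rightarrow> 'k. h \<in> torus n \<Longrightarrow> act h a = \<iota> (chi n \<alpha> h) * a) \<Longrightarrow> has_weight \<iota> n act a \<alpha>"
  unfolding has_weight_def by blast

lemma has_weight_lattice: "has_weight \<iota> n act a \<alpha> \<Longrightarrow> \<alpha> \<in> lattice n"
  unfolding has_weight_def by blast

lemma has_weight_act: "has_weight \<iota> n act a \<alpha> \<Longrightarrow> h \<in> torus n \<Longrightarrow> act h a = \<iota> (chi n \<alpha> h) * a"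
  unfolding has_weight_def by blast

lemma has_weight_zero: "\<alpha> \<in> lattice n \<Longrightarrow> has_weight \<iota> n act 0 \<alpha>"
  unfolding has_weight_def by (auto simp: act_0)

lemma has_weight_one: "has_weight \<iota> n act 1 (\<lambda>t. 0)"
  by (rule has_weightI) (auto simp: lattice_def chi_zero act_1 Kalg_one[OF Kalg])

lemma has_weight_scale: "has_weight \<iota> n act a \<alpha> \<Longrightarrow> has_weight \<iota> n act (\<iota> c * a) \<alpha>"
  unfolding has_weight_def
  by (auto simp: act_scale simp flip: mult.assoc Kalg_mult[OF Kalg]) (simp add: mult.commute)

lemma has_weight_add:
  "has_weight \<iota> n act a \<alpha> \<Longrightarrow> has_weight \<iota> n act b \<alpha> \<Longrightarrow> has_weight \<iota> n act (a + b) \<alpha>"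
  unfolding has_weight_def by (auto simp: act_add distrib_left)

lemma has_weight_diff:
  "has_weight \<iota> n act a \<alpha> \<Longrightarrow> has_weight \<iota> n act b \<alpha> \<Longrightarrow> has_weight \<iota> n act (a - b) \<alpha>"
  unfolding has_weight_def by (auto simp: act_diff right_diff_distrib)

lemma has_weight_sum:
  "\<alpha> \<in> lattice n \<Longrightarrow> (\<And>i. i \<in> S \<Longrightarrow> has_weight \<iota> n act (f i) \<alpha>) \<Longrightarrow> has_weight \<iota> n act (sum f S) \<alpha>"
  by (induction S rule: infinite_finite_induct) (auto simp: has_weight_zero has_weight_add)

lemma has_weight_mult:
  assumes "has_weight \<iota> n act a \<alpha>" "has_weight \<iota> n act b \<beta>"
  shows "has_weight \<iota> n act (a * b) (\<lambda>t. \<alpha> t + \<beta> t)"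
proof (rule has_weightI)
  show "(\<lambda>t. \<alpha> t + \<beta> t) \<in> lattice n"
    using assms[THEN has_weight_lattice] unfolding lattice_def by auto
  fix h :: "nat \<Rightarrow> 'k" assume h: "h \<in> torus n"
  have "act h (a * b) = \<iota> (chi n \<alpha> h) * (a * \<iota> (chi n \<beta> h)) * b"
    using act_mult[OF h] has_weight_act[OF assms(1) h] has_weight_act[OF assms(2) h]
    by (simp add: mult.assoc)
  also have "\<dots> = \<iota> (chi n \<alpha> h) * (\<iota> (chi n \<beta> h) * a) * b"
    using Kalg_commute[OF Kalg, of "chi n \<beta> h" a] by simp
  also have "\<dots> = \<iota> (chi n \<alpha> h * chi n \<beta> h) * (a * b)"
    by (simp add: Kalg_mult[OF Kalg] mult.assoc)
  finally show "act h (a * b) = \<iota> (chi n (\<lambda>t. \<alpha> t + \<beta> t) h) * (a * b)"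
    by (simp add: chi_add[OF h])
qed

lemma has_weight_power:
  assumes "has_weight \<iota> n act a \<alpha>"
  shows "has_weight \<iota> n act (a ^ m) (\<lambda>t. int m * \<alpha> t)"
proof (induction m)
  case 0
  then show ?case using has_weight_one by simp
next
  case (Suc m)
  then have "has_weight \<iota> n act (a ^ m * a) (\<lambda>t. int m * \<alpha> t + \<alpha> t)"
    using has_weight_mult assms by blast
  then show ?case by (simp add: power_commutes algebra_simps)
qed

text \<open>Evaluating at an \<open>h\<close> that separates \<open>\<alpha>\<^sub>0\<close> from the other weights and subtracting
  \<open>chi n \<alpha>\<^sub>0 h\<close> times the relation kills the \<open>\<alpha>\<^sub>0\<close>-component, giving a shorter relation.\<close>
lemma weight_vectors_independent:
  assumes "finite S" "S \<subseteq> lattice n" "\<forall>\<alpha>\<in>S. has_weight \<iota> n act (f \<alpha>) \<alpha>" "sum f S = 0"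
  shows "\<forall>\<alpha>\<in>S. f \<alpha> = 0"
  using assms
proof (induction S arbitrary: f rule: finite_induct)
  case empty
  then show ?case by simp
next
  case (insert \<alpha>\<^sub>0 S f)
  have rel: "f \<alpha>\<^sub>0 + sum f S = 0" using insert by simp
  have rest: "f \<alpha> = 0" if \<alpha>: "\<alpha> \<in> S" for \<alpha>
  proof -
    have "\<alpha> \<noteq> \<alpha>\<^sub>0" "\<alpha> \<in> lattice n" "\<alpha>\<^sub>0 \<in> lattice n" using \<alpha> insert by auto
    then obtain h where h: "h \<in> torus n" and sep: "chi n \<alpha> h \<noteq> (chi n \<alpha>\<^sub>0 h :: 'k)"
      using chi_separates by blast
    define g where "g \<beta> = \<iota> (chi n \<beta> h - chi n \<alpha>\<^sub>0 h) * f \<beta>" for \<beta>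
    have act_f: "act h (f \<beta>) = \<iota> (chi n \<beta> h) * f \<beta>" if "\<beta> \<in> insert \<alpha>\<^sub>0 S" for \<beta>
      using insert.prems(2) has_weight_act[OF _ h] that by blast
    have "\<iota> (chi n \<alpha>\<^sub>0 h) * f \<alpha>\<^sub>0 + (\<Sum>\<beta>\<in>S. \<iota> (chi n \<beta> h) * f \<beta>) = 0"
      using arg_cong[OF rel, of "act h"] by (simp add: act_add[OF h] act_sum[OF h] act_0[OF h] act_f)
    moreover have "\<iota> (chi n \<alpha>\<^sub>0 h) * f \<alpha>\<^sub>0 + (\<Sum>\<beta>\<in>S. \<iota> (chi n \<alpha>\<^sub>0 h) * f \<beta>) = 0"
      using arg_cong[OF rel, of "\<lambda>z. \<iota> (chi n \<alpha>\<^sub>0 h) * z"] by (simp add: distrib_left sum_distrib_left)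
    ultimately have "(\<Sum>\<beta>\<in>S. \<iota> (chi n \<beta> h) * f \<beta>) = (\<Sum>\<beta>\<in>S. \<iota> (chi n \<alpha>\<^sub>0 h) * f \<beta>)"
      by (metis add_left_cancel)
    then have "sum g S = 0"
      by (simp add: g_def Kalg_diff[OF Kalg] left_diff_distrib sum_subtractf)
    moreover have "\<forall>\<beta>\<in>S. has_weight \<iota> n act (g \<beta>) \<beta>"
      using insert.prems(2) has_weight_scale unfolding g_def by blast
    ultimately have "g \<alpha> = 0" using insert.IH[of g] insert.prems(1) \<alpha> by blast
    then show "f \<alpha> = 0" using sep Kalg_mult_eq_0D[OF Kalg] unfolding g_def by (meson right_minus_eq)
  qed
  then have "f \<alpha>\<^sub>0 = 0" using rel by simp
  with rest show ?case by simp
qed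

lemma has_weight_unique:
  assumes "has_weight \<iota> n act a \<alpha>" "has_weight \<iota> n act a \<beta>" "a \<noteq> 0"
  shows "\<alpha> = \<beta>"
proof (rule ccontr)
  assume "\<alpha> \<noteq> \<beta>"
  then obtain h where h: "h \<in> torus n" and sep: "chi n \<alpha> h \<noteq> (chi n \<beta> h :: 'k)"
    using chi_separates assms(1,2)[THEN has_weight_lattice] by blast
  have "\<iota> (chi n \<alpha> h) * a = \<iota> (chi n \<beta> h) * a"
    using has_weight_act[OF assms(1) h] has_weight_act[OF assms(2) h] by simp
  then have "\<iota> (chi n \<alpha> h - chi n \<beta> h) * a = 0" by (simp add: Kalg_diff[OF Kalg] left_diff_distrib)
  then show False using sep assms(3) Kalg_mult_eq_0D[OF Kalg] by (meson right_minus_eq)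
qed

lemma has_weight_wt: "has_weight \<iota> n act a \<alpha> \<Longrightarrow> a \<noteq> 0 \<Longrightarrow> wt \<iota> n act a = \<alpha>"
  unfolding wt_def using has_weight_unique by blast

lemma weight_in_support:
  assumes "finite S" "S \<subseteq> lattice n" "\<forall>\<alpha>\<in>S. has_weight \<iota> n act (f \<alpha>) \<alpha>"
    and "has_weight \<iota> n act (sum f S) \<gamma>" "sum f S \<noteq> 0"
  shows "\<gamma> \<in> S"
proof (rule ccontr)
  assume \<gamma>: "\<gamma> \<notin> S"
  define g where "g = f(\<gamma> := - sum f S)"
  have "sum g S = sum f S" using \<gamma> by (intro sum.cong) (auto simp: g_def)
  then have "sum g (insert \<gamma> S) = 0" using \<gamma> assms(1) by (simp add: g_def)
  moreover have "\<forall>\<alpha>\<in>insert \<gamma> S. has_weight \<iota> n act (g \<alpha>) \<alpha>"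
    using assms(3,4) has_weight_diff[OF has_weight_zero] has_weight_lattice
    by (auto simp: g_def)
  moreover have "insert \<gamma> S \<subseteq> lattice n" using assms(2,4) has_weight_lattice by blast
  ultimately have "g \<gamma> = 0" using weight_vectors_independent assms(1) by blast
  with assms(5) show False by (simp add: g_def)
qed

text \<open>Write the eigenvector as a sum of weight vectors: by independence, every character
  occurring with a nonzero component takes the eigenvalue.\<close>
lemma eigvec_has_wt:
  assumes "is_eigvec \<iota> n act a"
  shows "has_weight \<iota> n act a (wt \<iota> n act a)"
proof -
  obtain S f where S: "finite S" "S \<subseteq> lattice n" "\<forall>\<alpha>\<in>S. has_weight \<iota> n act (f \<alpha>) \<alpha>"
    and a: "a = sum f S"
    using rational unfolding rational_torus_action_def by meson
  have "a \<noteq> 0" using assms unfolding is_eigvec_def by blast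
  then obtain \<alpha>\<^sub>0 where \<alpha>\<^sub>0: "\<alpha>\<^sub>0 \<in> S" "f \<alpha>\<^sub>0 \<noteq> 0" using a sum.neutral[where g = f and A = S] by blast
  have "has_weight \<iota> n act a \<alpha>\<^sub>0"
  proof (rule has_weightI)
    show "\<alpha>\<^sub>0 \<in> lattice n" using S(2) \<alpha>\<^sub>0 by blast
    fix h :: "nat \<Rightarrow> 'k" assume h: "h \<in> torus n"
    obtain c where c: "act h a = \<iota> c * a" using assms h unfolding is_eigvec_def by blast
    define g where "g \<beta> = \<iota> (chi n \<beta> h - c) * f \<beta>" for \<beta>
    have "(\<Sum>\<beta>\<in>S. act h (f \<beta>)) = (\<Sum>\<beta>\<in>S. \<iota> (chi n \<beta> h) * f \<beta>)"
      using S(3) has_weight_act[OF _ h] by (intro sum.cong) auto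
    then have "sum g S = (\<Sum>\<beta>\<in>S. act h (f \<beta>)) - \<iota> c * a"
      by (simp add: g_def a Kalg_diff[OF Kalg] left_diff_distrib sum_subtractf sum_distrib_left)
    also have "\<dots> = 0" using c by (simp add: a act_sum[OF h])
    finally have "sum g S = 0" .
    moreover have "\<forall>\<beta>\<in>S. has_weight \<iota> n act (g \<beta>) \<beta>" using S(3) has_weight_scale unfolding g_def by blast
    ultimately have "g \<alpha>\<^sub>0 = 0" using weight_vectors_independent[OF S(1,2)] \<alpha>\<^sub>0(1) by blast
    then have "chi n \<alpha>\<^sub>0 h = c"
      using Kalg_mult_eq_0D[OF Kalg] \<alpha>\<^sub>0(2) unfolding g_def by (meson right_minus_eq)
    then show "act h a = \<iota> (chi n \<alpha>\<^sub>0 h) * a" using c by simp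
  qed
  then show ?thesis using has_weight_wt \<open>a \<noteq> 0\<close> by simp
qed

end

text \<open>Fraction-free elimination of the last unknown with a pivot row \<open>p\<close>.\<close>
lemma int_homogeneous_system_nontrivial_solution:
  fixes b :: "'i \<Rightarrow> nat \<Rightarrow> int"
  assumes "finite T" "card T < n"
  shows "\<exists>v. (\<exists>j<n. v j \<noteq> 0) \<and> (\<forall>i\<in>T. (\<Sum>j<n. v j * b i j) = 0)"
  using assms
proof (induction n arbitrary: T b)
  case 0
  then show ?case by simp
next
  case (Suc n)
  show ?case
  proof (cases "\<forall>i\<in>T. b i n = 0")
    case True
    then show ?thesis
      by (intro exI[of _ "\<lambda>j. of_bool (j = n)"]) (auto simp: lessThan_Suc)
  next
    case False
    then obtain p where p: "p \<in> T" "b p n \<noteq> 0" by blast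
    define b' where "b' i j = b p n * b i j - b i n * b p j" for i j
    have "card T > 0" using p(1) Suc.prems(1) card_gt_0_iff by blast
    then have "card (T - {p}) < n" using Suc.prems p by (simp add: card_Diff_singleton)
    then obtain v' where v'_ne: "\<exists>j<n. v' j \<noteq> 0" and v': "\<forall>i\<in>T - {p}. (\<Sum>j<n. v' j * b' i j) = 0"
      using Suc.IH[of "T - {p}" b'] Suc.prems(1) by blast
    define s where "s i = (\<Sum>j<n. v' j * b i j)" for i
    define v where "v j = (if j = n then - s p else b p n * v' j)" for j
    have v_eq: "(\<Sum>j<Suc n. v j * b i j) = b p n * s i - s p * b i n" for i
    proof -
      have "(\<Sum>j<n. v j * b i j) = b p n * s i"
        unfolding s_def v_def by (simp add: sum_distrib_left mult.assoc)
      then show ?thesis by (simp add: lessThan_Suc v_def)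
    qed
    have v'_eq: "(\<Sum>j<n. v' j * b' i j) = b p n * s i - b i n * s p" for i
      unfolding s_def b'_def by (simp add: sum_subtractf sum_distrib_left algebra_simps)
    have "(\<Sum>j<Suc n. v j * b i j) = 0" if "i \<in> T" for i
    proof (cases "i = p")
      case True
      then show ?thesis using v_eq by (simp add: mult.commute)
    next
      case False
      then show ?thesis using v_eq v'[rule_format, of i] v'_eq that by (simp add: mult.commute)
    qed
    moreover have "\<exists>j<Suc n. v j \<noteq> 0" using v'_ne p(2) by (auto simp: v_def)
    ultimately show ?thesis by blast
  qed
qed

lemma Qgen_step:
  assumes "k \<ge> 1"
  shows "Qgen \<iota> n act x k = {(\<lambda>t. q t + m * wt \<iota> n act (x k) t) | q m. q \<in> Qgen \<iota> n act x (k - 1)}"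
proof -
  obtain j where k: "k = Suc j" using assms by (cases k) auto
  let ?w = "\<lambda>i. wt \<iota> n act (x i)"
  have split: "(\<lambda>t. \<Sum>i\<in>{1..k}. c i * ?w i t) = (\<lambda>t. (\<Sum>i\<in>{1..j}. c i * ?w i t) + c k * ?w k t)" for c
    by (simp add: k)
  have upd: "(\<Sum>i\<in>{1..j}. (c(k := m)) i * ?w i t) = (\<Sum>i\<in>{1..j}. c i * ?w i t)" for c m t
    by (rule sum.cong) (auto simp: k)
  show ?thesis
  proof (intro equalityI subsetI)
    fix p assume "p \<in> Qgen \<iota> n act x k"
    then obtain c where "p = (\<lambda>t. \<Sum>i\<in>{1..k}. c i * ?w i t)" unfolding Qgen_def by blast
    then show "p \<in> {(\<lambda>t. q t + m * ?w k t) | q m. q \<in> Qgen \<iota> n act x (k - 1)}"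
      unfolding split by (auto simp: Qgen_def k)
  next
    fix p assume "p \<in> {(\<lambda>t. q t + m * ?w k t) | q m. q \<in> Qgen \<iota> n act x (k - 1)}"
    then obtain c m where "p = (\<lambda>t. (\<Sum>i\<in>{1..j}. c i * ?w i t) + m * ?w k t)"
      unfolding Qgen_def k by auto
    then have "p = (\<lambda>t. \<Sum>i\<in>{1..k}. (c(k := m)) i * ?w i t)" unfolding split upd by simp
    then show "p \<in> Qgen \<iota> n act x k" unfolding Qgen_def by blast
  qed
qed

lemma Qgen_add_smult:
  assumes "p \<in> Qgen \<iota> n act x j" "q \<in> Qgen \<iota> n act x j"
  shows "(\<lambda>t. p t + m * q t) \<in> Qgen \<iota> n act x j"
proof -
  obtain c d where "p = (\<lambda>t. \<Sum>i\<in>{1..j}. c i * wt \<iota> n act (x i) t)"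
    and "q = (\<lambda>t. \<Sum>i\<in>{1..j}. d i * wt \<iota> n act (x i) t)"
    using assms unfolding Qgen_def by blast
  then have "(\<lambda>t. p t + m * q t) = (\<lambda>t. \<Sum>i\<in>{1..j}. (c i + m * d i) * wt \<iota> n act (x i) t)"
    by (simp add: sum.distrib sum_distrib_left algebra_simps)
  then show ?thesis unfolding Qgen_def mem_Collect_eq by (rule exI[of _ "\<lambda>i. c i + m * d i"])
qed

lemma Qgen_eq_prev:
  assumes "k \<ge> 1" "wt \<iota> n act (x k) \<in> Qgen \<iota> n act x (k - 1)"
  shows "Qgen \<iota> n act x k = Qgen \<iota> n act x (k - 1)"
proof (intro equalityI subsetI)
  fix p assume "p \<in> Qgen \<iota> n act x k"
  then show "p \<in> Qgen \<iota> n act x (k - 1)"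
    unfolding Qgen_step[OF assms(1)] using Qgen_add_smult[OF _ assms(2)] by blast
next
  fix p assume "p \<in> Qgen \<iota> n act x (k - 1)"
  then show "p \<in> Qgen \<iota> n act x k"
    unfolding Qgen_step[OF assms(1)] by (intro CollectI exI[of _ p] exI[of _ 0]) simp
qed

lemma Qgen_orthogonal:
  assumes "\<forall>i\<in>{1..j}. (\<Sum>l<n. v l * wt \<iota> n act (x i) l) = 0" "q \<in> Qgen \<iota> n act x j"
  shows "(\<Sum>l<n. v l * q l) = 0"
proof -
  obtain c where q: "q = (\<lambda>t. \<Sum>i\<in>{1..j}. c i * wt \<iota> n act (x i) t)"
    using assms(2) unfolding Qgen_def by blast
  have "(\<Sum>l<n. v l * q l) = (\<Sum>l<n. \<Sum>i\<in>{1..j}. c i * (v l * wt \<iota> n act (x i) l))"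
    by (simp add: q sum_distrib_left mult.left_commute)
  also have "\<dots> = (\<Sum>i\<in>{1..j}. c i * (\<Sum>l<n. v l * wt \<iota> n act (x i) l))"
    by (subst sum.swap) (simp add: sum_distrib_left)
  finally show ?thesis using assms(1) by simp
qed

lemma orthogonal_wt_induct:
  assumes "\<forall>i\<in>{1..N}. (\<forall>q\<in>Qgen \<iota> n act x (i - 1). (\<Sum>l<n. v l * q l) = 0)
             \<longrightarrow> (\<Sum>l<n. v l * wt \<iota> n act (x i) l) = 0"
  shows "\<forall>i\<in>{1..N}. (\<Sum>l<n. v l * wt \<iota> n act (x i) l) = 0"
proof -
  have "j \<le> N \<Longrightarrow> \<forall>i\<in>{1..j}. (\<Sum>l<n. v l * wt \<iota> n act (x i) l) = 0" for j
  proof (induction j)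
    case 0
    then show ?case by simp
  next
    case (Suc j)
    then have IH: "\<forall>i\<in>{1..j}. (\<Sum>l<n. v l * wt \<iota> n act (x i) l) = 0" by simp
    then have "\<forall>q\<in>Qgen \<iota> n act x j. (\<Sum>l<n. v l * q l) = 0" using Qgen_orthogonal by blast
    then have "(\<Sum>l<n. v l * wt \<iota> n act (x (Suc j)) l) = 0"
      using assms[rule_format, of "Suc j"] Suc.prems by simp
    with IH show ?case by (auto simp: le_Suc_eq)
  qed
  then show ?thesis by blast
qed

lemma Rsub_term: "e \<in> expv j \<Longrightarrow> \<iota> c * mono x j e \<in> Rsub \<iota> x j"
  unfolding Rsub_def by (intro CollectI exI[of _ "{e}"] exI[of _ "\<lambda>_. c"]) simp

lemma Rsub_mono: "Kalg \<iota> \<Longrightarrow> e \<in> expv j \<Longrightarrow> mono x j e \<in> Rsub \<iota> x j"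
  using Rsub_term[of e j \<iota> 1] by (simp add: Kalg_one)

lemma sigma_der_eq_0_if_eq_0_on_mono:
  assumes "Kalg \<iota>" "is_sigma_der \<iota> (Rsub \<iota> x j) s d" "\<forall>e\<in>expv j. d (mono x j e) = 0"
    and "a \<in> Rsub \<iota> x j"
  shows "d a = 0"
proof -
  have add: "d (a + b) = d a + d b" if "a \<in> Rsub \<iota> x j" "b \<in> Rsub \<iota> x j" for a b
    using assms(2) that unfolding is_sigma_der_def by blast
  have scale: "d (\<iota> c * a) = \<iota> c * d a" if "a \<in> Rsub \<iota> x j" for a c
    using assms(2) that unfolding is_sigma_der_def by blast
  obtain S c where S: "finite S" "S \<subseteq> expv j" and a: "a = (\<Sum>e\<in>S. \<iota> (c e) * mono x j e)"
    using assms(4) unfolding Rsub_def by blast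
  have in_Rsub: "(\<Sum>e\<in>S'. \<iota> (c e) * mono x j e) \<in> Rsub \<iota> x j" if "S' \<subseteq> S" for S'
    using finite_subset[OF that S(1)] that S(2) unfolding Rsub_def by blast
  have "d (\<Sum>e\<in>S'. \<iota> (c e) * mono x j e) = 0" if "S' \<subseteq> S" for S'
    using finite_subset[OF that S(1)] that
  proof (induction S' rule: finite_induct)
    case empty
    then show ?case using add[OF in_Rsub in_Rsub, of "{}" "{}"] by simp
  next
    case (insert e S')
    then have e: "e \<in> expv j" using S(2) by blast
    have "d (\<Sum>e\<in>insert e S'. \<iota> (c e) * mono x j e)
        = \<iota> (c e) * d (mono x j e) + d (\<Sum>e\<in>S'. \<iota> (c e) * mono x j e)"
      using insert add[OF Rsub_term[OF e] in_Rsub] scale[OF Rsub_mono[OF assms(1) e]] by simp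
    then show ?case using insert assms(3) e by simp
  qed
  then show ?thesis using a by blast
qed

locale qna =
  fixes \<iota> :: "'k::field_char_0 \<Rightarrow> 'r::ring_1" and x :: "nat \<Rightarrow> 'r" and N :: nat
    and \<sigma> \<delta> :: "nat \<Rightarrow> 'r \<Rightarrow> 'r" and n :: nat and act :: "(nat \<Rightarrow> 'k) \<Rightarrow> 'r \<Rightarrow> 'r"
  assumes QNA: "QNA \<iota> x N \<sigma> \<delta> n act"

sublocale qna \<subseteq> torus_action \<iota> n act
  using QNA unfolding QNA_def by unfold_locales blast+

context qna
begin

abbreviation \<beta> :: "nat \<Rightarrow> nat \<Rightarrow> int" where
  "\<beta> i \<equiv> wt \<iota> n act (x i)"

lemma Rsub_N_eq_UNIV: "Rsub \<iota> x N = UNIV"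
  using QNA unfolding QNA_def PBW_basis_def by blast

lemma sigma_der: "k \<in> {1..N} \<Longrightarrow> is_sigma_der \<iota> (Rsub \<iota> x (k - 1)) (\<sigma> k) (\<delta> k)"
  using QNA unfolding QNA_def by blast

lemma x_commute: "k \<in> {1..N} \<Longrightarrow> a \<in> Rsub \<iota> x (k - 1) \<Longrightarrow> x k * a = \<sigma> k a * x k + \<delta> k a"
  using QNA unfolding QNA_def by blast

lemma sigma_eq_act: "k \<in> {1..N} \<Longrightarrow> \<exists>h\<in>torus n. \<forall>a\<in>Rsub \<iota> x (k - 1). act h a = \<sigma> k a"
  using QNA unfolding QNA_def by blast

lemma rank_eq_card: "n = card {k\<in>{1..N}. \<forall>a\<in>Rsub \<iota> x (k - 1). \<delta> k a = 0}"
  using QNA unfolding QNA_def by blast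

lemma act_faithful: "h \<in> torus n \<Longrightarrow> act h = id \<Longrightarrow> h = (\<lambda>i. 1)"
  using QNA unfolding QNA_def by blast

lemma x_has_weight: "i \<in> {1..N} \<Longrightarrow> has_weight \<iota> n act (x i) (\<beta> i)"
  using QNA eigvec_has_wt unfolding QNA_def by blast

lemma mono_has_weight:
  "j \<le> N \<Longrightarrow> has_weight \<iota> n act (mono x j e) (\<lambda>t. \<Sum>i\<in>{1..j}. int (e i) * \<beta> i t)"
proof (induction j)
  case 0
  then show ?case using has_weight_one by simp
next
  case (Suc j)
  then have "has_weight \<iota> n act (mono x j e * x (Suc j) ^ e (Suc j))
               (\<lambda>t. (\<Sum>i\<in>{1..j}. int (e i) * \<beta> i t) + int (e (Suc j)) * \<beta> (Suc j) t)"
    by (intro has_weight_mult has_weight_power x_has_weight) auto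
  then show ?case by simp
qed

lemma weight_in_Qgen_if_in_Rsub:
  assumes "j \<le> N" "a \<in> Rsub \<iota> x j" "a \<noteq> 0" "has_weight \<iota> n act a \<gamma>"
  shows "\<gamma> \<in> Qgen \<iota> n act x j"
proof -
  obtain S c where S: "finite S" "S \<subseteq> expv j" and a: "a = (\<Sum>e\<in>S. \<iota> (c e) * mono x j e)"
    using assms(2) unfolding Rsub_def by blast
  define w where "w e = (\<lambda>t. \<Sum>i\<in>{1..j}. int (e i) * \<beta> i t)" for e :: "nat \<Rightarrow> nat"
  define F where "F \<alpha> = (\<Sum>e\<in>{e\<in>S. w e = \<alpha>}. \<iota> (c e) * mono x j e)" for \<alpha>
  have term_weight: "has_weight \<iota> n act (\<iota> (c e) * mono x j e) (w e)" for e
    unfolding w_def using mono_has_weight[OF assms(1)] has_weight_scale by blast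
  have "w ` S \<subseteq> lattice n" using term_weight has_weight_lattice by blast
  moreover have "\<forall>\<alpha>\<in>w ` S. has_weight \<iota> n act (F \<alpha>) \<alpha>"
  proof
    fix \<alpha> assume "\<alpha> \<in> w ` S"
    then have "\<alpha> \<in> lattice n" using term_weight has_weight_lattice by blast
    then show "has_weight \<iota> n act (F \<alpha>) \<alpha>"
      unfolding F_def by (rule has_weight_sum) (use term_weight in force)
  qed
  moreover have "sum F (w ` S) = a"
    unfolding F_def a by (rule sum.group[OF S(1) finite_imageI[OF S(1)]]) auto
  ultimately have "\<gamma> \<in> w ` S" using weight_in_support[of "w ` S" F \<gamma>] S(1) assms(3,4) by simp
  then show ?thesis unfolding w_def Qgen_def by auto
qed

lemma delta_mono_has_weight:
  assumes k: "k \<in> {1..N}" and e: "e \<in> expv (k - 1)"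
  shows "has_weight \<iota> n act (\<delta> k (mono x (k - 1) e))
           (\<lambda>t. \<beta> k t + (\<Sum>i\<in>{1..k - 1}. int (e i) * \<beta> i t))"
proof -
  let ?m = "mono x (k - 1) e" and ?\<mu> = "\<lambda>t. \<Sum>i\<in>{1..k - 1}. int (e i) * \<beta> i t"
  have "k - 1 \<le> N" using k by auto
  then have m: "has_weight \<iota> n act ?m ?\<mu>" by (rule mono_has_weight)
  have xk: "has_weight \<iota> n act (x k) (\<beta> k)" using x_has_weight k .
  have mR: "?m \<in> Rsub \<iota> x (k - 1)" using Rsub_mono[OF Kalg e] .
  obtain h where h: "h \<in> torus n" and "\<forall>a\<in>Rsub \<iota> x (k - 1). act h a = \<sigma> k a"
    using sigma_eq_act k by blast
  then have "\<sigma> k ?m = \<iota> (chi n ?\<mu> h) * ?m" using mR has_weight_act[OF m h] by simp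
  then have "\<delta> k ?m = x k * ?m - \<iota> (chi n ?\<mu> h) * (?m * x k)"
    using x_commute[OF k mR] by (simp add: mult.assoc eq_diff_eq)
  moreover have "has_weight \<iota> n act (x k * ?m) (\<lambda>t. \<beta> k t + ?\<mu> t)"
    by (rule has_weight_mult[OF xk m])
  moreover have "has_weight \<iota> n act (\<iota> (chi n ?\<mu> h) * (?m * x k)) (\<lambda>t. \<beta> k t + ?\<mu> t)"
    using has_weight_scale[OF has_weight_mult[OF m xk]] by (simp add: add.commute)
  ultimately show ?thesis by (simp add: has_weight_diff)
qed

lemma wt_in_Qgen_if_delta_ne_0:
  assumes k: "k \<in> {1..N}" and "\<exists>a\<in>Rsub \<iota> x (k - 1). \<delta> k a \<noteq> 0"
  shows "\<beta> k \<in> Qgen \<iota> n act x (k - 1)"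
proof -
  obtain e where e: "e \<in> expv (k - 1)" and de: "\<delta> k (mono x (k - 1) e) \<noteq> 0"
    using assms sigma_der_eq_0_if_eq_0_on_mono[OF Kalg sigma_der] by blast
  let ?\<mu> = "\<lambda>t. \<Sum>i\<in>{1..k - 1}. int (e i) * \<beta> i t"
  have "\<delta> k (mono x (k - 1) e) \<in> Rsub \<iota> x (k - 1)"
    using sigma_der[OF k] Rsub_mono[OF Kalg e] unfolding is_sigma_der_def by blast
  moreover have "k - 1 \<le> N" using k by auto
  ultimately have "(\<lambda>t. \<beta> k t + ?\<mu> t) \<in> Qgen \<iota> n act x (k - 1)"
    using weight_in_Qgen_if_in_Rsub de delta_mono_has_weight[OF k e] by blast
  moreover have "?\<mu> \<in> Qgen \<iota> n act x (k - 1)" unfolding Qgen_def by auto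
  ultimately have "(\<lambda>t. (\<beta> k t + ?\<mu> t) + (-1) * ?\<mu> t) \<in> Qgen \<iota> n act x (k - 1)"
    by (rule Qgen_add_smult)
  then show ?thesis by simp
qed

lemma act_eq_id_if_fixes_x:
  assumes h: "h \<in> torus n" and fix_x: "\<forall>i\<in>{1..N}. act h (x i) = x i"
  shows "act h = id"
proof
  fix a
  have fix_mono: "j \<le> N \<Longrightarrow> act h (mono x j e) = mono x j e" for j e
    by (induction j) (auto simp: act_1[OF h] act_mult[OF h] act_power[OF h] fix_x)
  obtain S c where "a = (\<Sum>e\<in>S. \<iota> (c e) * mono x N e)"
    using Rsub_N_eq_UNIV unfolding Rsub_def by blast
  then show "act h a = id a" by (simp add: act_sum[OF h] act_scale[OF h] fix_mono)
qed

lemma orthogonal_wts_eq_0: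
  assumes "\<forall>i\<in>{1..N}. (\<Sum>l<n. v l * \<beta> i l) = 0"
  shows "\<forall>l<n. v l = 0"
proof -
  define h :: "nat \<Rightarrow> 'k" where "h = cochar n v 2"
  have h: "h \<in> torus n" unfolding h_def by (simp add: cochar_in_torus)
  have "act h (x i) = x i" if "i \<in> {1..N}" for i
  proof -
    have "chi n (\<beta> i) h = 1" using assms that by (simp add: h_def chi_cochar)
    then show ?thesis using has_weight_act[OF x_has_weight[OF that] h] by (simp add: Kalg_one[OF Kalg])
  qed
  then have h_1: "h = (\<lambda>i. 1)" using act_faithful[OF h] act_eq_id_if_fixes_x[OF h] by blast
  show ?thesis
  proof (intro allI impI)
    fix l assume "l < n"
    then have "(2::'k) powi v l = 1" using fun_cong[OF h_1, of l] by (simp add: h_def cochar_def)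
    then show "v l = 0" by (rule two_power_int_eq_1D)
  qed
qed

lemma Qgen_step_direct:
  assumes k: "k \<in> {1..N}" and "\<forall>a\<in>Rsub \<iota> x (k - 1). \<delta> k a = 0"
    and mult_in_Qgen: "(\<lambda>t. m * \<beta> k t) \<in> Qgen \<iota> n act x (k - 1)"
  shows "m = 0"
proof (rule ccontr)
  assume "m \<noteq> 0"
  define Z where "Z = {i\<in>{1..N}. \<forall>a\<in>Rsub \<iota> x (i - 1). \<delta> i a = 0}"
  have Z: "finite Z" "k \<in> Z" "n = card Z" using assms(1,2) rank_eq_card by (auto simp: Z_def)
  moreover have "card Z > 0" using Z(1,2) card_gt_0_iff by blast
  ultimately have "card (Z - {k}) < n" by (simp add: card_Diff_singleton)
  then obtain v where v_ne: "\<exists>l<n. v l \<noteq> 0" and v_Z: "\<forall>i\<in>Z - {k}. (\<Sum>l<n. v l * \<beta> i l) = 0"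
    using int_homogeneous_system_nontrivial_solution[of "Z - {k}" n "\<lambda>i. \<beta> i"] Z(1) by blast
  have "\<forall>i\<in>{1..N}. (\<Sum>l<n. v l * \<beta> i l) = 0"
  proof (rule orthogonal_wt_induct, intro ballI impI)
    fix i assume i: "i \<in> {1..N}" and orth: "\<forall>q\<in>Qgen \<iota> n act x (i - 1). (\<Sum>l<n. v l * q l) = 0"
    consider "i \<in> Z - {k}" | "i = k" | "i \<notin> Z" by blast
    then show "(\<Sum>l<n. v l * \<beta> i l) = 0"
    proof cases
      case 1
      then show ?thesis using v_Z by blast
    next
      case 2
      have "m * (\<Sum>l<n. v l * \<beta> k l) = (\<Sum>l<n. v l * (m * \<beta> k l))"
        by (simp add: sum_distrib_left mult.left_commute)
      also have "\<dots> = 0" using orth mult_in_Qgen 2 by simp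
      finally show ?thesis using \<open>m \<noteq> 0\<close> 2 by simp
    next
      case 3
      then have "\<beta> i \<in> Qgen \<iota> n act x (i - 1)" using i wt_in_Qgen_if_delta_ne_0 by (auto simp: Z_def)
      then show ?thesis using orth by blast
    qed
  qed
  then show False using orthogonal_wts_eq_0 v_ne by blast
qed

end

theorem lemma5p5:
  fixes \<iota> :: "'k::field_char_0 \<Rightarrow> 'r::ring_1"
    and x :: "nat \<Rightarrow> 'r" and N :: nat and \<sigma> \<delta> :: "nat \<Rightarrow> 'r \<Rightarrow> 'r"
    and n :: nat and act :: "(nat \<Rightarrow> 'k) \<Rightarrow> 'r \<Rightarrow> 'r" and k :: nat
  assumes "QNA \<iota> x N \<sigma> \<delta> n act"
    and "k \<in> {1..N}"
  shows "((\<exists>a\<in>Rsub \<iota> x (k - 1). \<delta> k a \<noteq> 0) \<longrightarrow> Qgen \<iota> n act x k = Qgen \<iota> n act x (k - 1))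
       \<and> ((\<forall>a\<in>Rsub \<iota> x (k - 1). \<delta> k a = 0) \<longrightarrow>
            Qgen \<iota> n act x k = {(\<lambda>t. q t + m * wt \<iota> n act (x k) t) | q m. q \<in> Qgen \<iota> n act x (k - 1)}
          \<and> (\<forall>q\<in>Qgen \<iota> n act x (k - 1). \<forall>m::int. q = (\<lambda>t. m * wt \<iota> n act (x k) t) \<longrightarrow> m = 0))"
proof -
  interpret qna \<iota> x N \<sigma> \<delta> n act by unfold_locales (rule assms(1))
  have "k \<ge> 1" using assms(2) by simp
  show ?thesis
  proof (intro conjI impI ballI allI)
    assume "\<exists>a\<in>Rsub \<iota> x (k - 1). \<delta> k a \<noteq> 0"
    then show "Qgen \<iota> n act x k = Qgen \<iota> n act x (k - 1)"
      using Qgen_eq_prev \<open>k \<ge> 1\<close> wt_in_Qgen_if_delta_ne_0[OF assms(2)] by blast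
  next
    show "Qgen \<iota> n act x k = {(\<lambda>t. q t + m * wt \<iota> n act (x k) t) | q m. q \<in> Qgen \<iota> n act x (k - 1)}"
      using Qgen_step \<open>k \<ge> 1\<close> .
  next
    fix q m
    assume "\<forall>a\<in>Rsub \<iota> x (k - 1). \<delta> k a = 0" "q \<in> Qgen \<iota> n act x (k - 1)"
      and "q = (\<lambda>t. m * wt \<iota> n act (x k) t)"
    then show "m = 0" using Qgen_step_direct[OF assms(2)] by blast
  qed
qed

end
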